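(* Let $L>0$ and let $\alpha,\beta:\mathbb{R}\to\mathbb{R}^2$ be smooth $L$-periodic maps with $\alpha'$ nowhere zero, $\langle\beta,\alpha'\rangle = 0$ and $|\alpha'|^2+|\beta|^2=1$. Let $\gamma(t,s) = \tfrac12(\alpha(s+t)+\alpha(s-t)) + \tfrac12\int_{s-t}^{s+t}\beta(\xi)\,d\xi$, $a=\alpha'+\beta$, $b=\alpha'-\beta$, and let $\psi,\tilde\psi:\mathbb{R}\to\mathbb{R}$ be smooth functions with $a = (\cos\psi,\sin\psi)$ and $b = -(\cos\tilde\psi,\sin\tilde\psi)$. Assume that the closed curve $\alpha$ has non-zero rotation index and that the unit tangent map is continuous. If $\psi(s_0) = \psi(s_1) = \tilde\psi(r_0)$ for some $s_0,s_1,r_0$ with $0 < s_1 - s_0 < L$, then $\psi$ is constant on $(s_0,s_1)$.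
   Context: The unit tangent map is $U(t,s) = \gamma_{,s}(t,s)/|\gamma_{,s}(t,s)|$, defined where $\gamma_{,s}(t,s)\neq 0$; note $2\gamma_{,s}(t,s) = a(s+t)+b(s-t)$. "The unit tangent map is continuous" means that for every $t\in\mathbb{R}$, $s\mapsto U(t,s)$ extends to a continuous map on all of $\mathbb{R}$. The rotation index of $\alpha$ is the degree of $\alpha'/|\alpha'|$ as a map from $\mathbb{R}/L\mathbb{Z}$ to the unit circle; $a$ and $b$ have the same degree $d$, so $\psi(s+L)-\psi(s) = \tilde\psi(s+L)-\tilde\psi(s) = 2\pi d$. *)

theory Defs
  imports "HOL-Complex_Analysis.Complex_Analysis"
begin

text \<open>The plane R^2 is modelled by the complex numbers; (x,y) corresponds to Complex x y,
  so (cos p, sin p) is cis p and the Euclidean inner product is the inner product on complex.\<close>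

definition vderiv :: "(real \<Rightarrow> 'a::real_normed_vector) \<Rightarrow> real \<Rightarrow> 'a" where
  "vderiv f = (\<lambda>x. vector_derivative f (at x))"

definition smooth_fun :: "(real \<Rightarrow> 'a::real_normed_vector) \<Rightarrow> bool" where
  "smooth_fun f \<longleftrightarrow> (\<forall>n x. (vderiv ^^ n) f differentiable (at x))"

definition oint :: "real \<Rightarrow> real \<Rightarrow> (real \<Rightarrow> complex) \<Rightarrow> complex" where
  "oint u v f = (if u \<le> v then integral {u..v} f else - integral {v..u} f)"

definition gam :: "(real \<Rightarrow> complex) \<Rightarrow> (real \<Rightarrow> complex) \<Rightarrow> real \<Rightarrow> real \<Rightarrow> complex" where
  "gam \<alpha> \<beta> t s = (\<alpha> (s + t) + \<alpha> (s - t)) / 2 + oint (s - t) (s + t) \<beta> / 2"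

definition gam_s :: "(real \<Rightarrow> complex) \<Rightarrow> (real \<Rightarrow> complex) \<Rightarrow> real \<Rightarrow> real \<Rightarrow> complex" where
  "gam_s \<alpha> \<beta> t s = vderiv (\<lambda>s'. gam \<alpha> \<beta> t s') s"

definition unit_tangent :: "(real \<Rightarrow> complex) \<Rightarrow> (real \<Rightarrow> complex) \<Rightarrow> real \<Rightarrow> real \<Rightarrow> complex" where
  "unit_tangent \<alpha> \<beta> t s = gam_s \<alpha> \<beta> t s / of_real (cmod (gam_s \<alpha> \<beta> t s))"

text \<open>The unit tangent map is continuous: for every t, s \<mapsto> U(t,s), defined where
  gamma_s(t,s) is nonzero, extends to a continuous map on all of R.\<close>
definition unit_tangent_continuous :: "(real \<Rightarrow> complex) \<Rightarrow> (real \<Rightarrow> complex) \<Rightarrow> bool" where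
  "unit_tangent_continuous \<alpha> \<beta> \<longleftrightarrow>
     (\<forall>t. \<exists>g. continuous_on UNIV g \<and>
        (\<forall>s. gam_s \<alpha> \<beta> t s \<noteq> 0 \<longrightarrow> g s = unit_tangent \<alpha> \<beta> t s))"

text \<open>Rotation index of the L-periodic closed curve alpha: the degree of alpha'/|alpha'|
  on R/LZ, i.e. the winding number of the closed path alpha' over one period around 0.\<close>
definition rotation_index :: "real \<Rightarrow> (real \<Rightarrow> complex) \<Rightarrow> complex" where
  "rotation_index L \<alpha> = winding_number (\<lambda>u. vderiv \<alpha> (L * u)) 0"

end

theory Submission
  imports Defs
begin

text \<open>Write \<open>a = cis \<psi>\<close> and \<open>b = - cis \<psi>t\<close>, so that \<open>2 \<gamma>_s(t,s) = cis (\<psi> (s+t)) - cis (\<psi>t (s-t))\<close>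
  \<open>= 2 \<i> sin (\<theta>/2) cis ((\<psi> (s+t) + \<psi>t (s-t))/2)\<close> with \<open>\<theta> = \<psi> (s+t) - \<psi>t (s-t)\<close>.
  If \<open>cis (\<psi> u) = cis (\<psi>t v)\<close> but \<open>\<psi>' u \<noteq> \<psi>t' v\<close>, then along \<open>t = (u-v)/2\<close> the factor
  \<open>sin (\<theta>/2)\<close> changes sign transversally at \<open>s = (u+v)/2\<close>, so the unit tangent jumps to its
  negative there; continuity of the unit tangent therefore forces \<open>\<psi>' u = \<psi>t' v\<close>.
  A nonzero rotation index makes \<open>cis \<circ> \<psi>t\<close> surjective (otherwise \<open>\<psi>\<close> and \<open>\<psi>t\<close> would be
  periodic and \<open>\<alpha>'\<close> would have a continuous logarithm), so \<open>\<psi>' x\<close> depends only on \<open>\<psi> x\<close>.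
  A function whose derivative depends only on its value cannot leave and return to a level:
  past the last point where it re-attains an intermediate level it would have to keep increasing.
  Hence \<open>\<psi>\<close> is constant on \<open>[s0, s1]\<close>; the hypotheses \<open>\<psi> s1 = \<psi>t r0\<close> and
  \<open>s1 - s0 < L\<close> are subsumed by the surjectivity of \<open>cis \<circ> \<psi>t\<close>.\<close>

lemma cis_diff:
  "cis p - cis q = 2 * \<i> * of_real (sin ((p - q) / 2)) * cis ((p + q) / 2)"
proof -
  have "cis p = cis ((p + q) / 2) * cis ((p - q) / 2)"
   and "cis q = cis ((p + q) / 2) * cis (- ((p - q) / 2))"
    by (simp_all add: cis_mult field_simps)
  moreover have "cis x - cis (- x) = 2 * \<i> * of_real (sin x)" for x
    by (simp add: complex_eq_iff)
  ultimately show ?thesis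
    by (metis (no_types, lifting) mult.commute right_diff_distrib)
qed

lemma cis_eq_cis_iff_sin_half_diff: "cis p = cis q \<longleftrightarrow> sin ((p - q) / 2) = 0"
  using cis_diff[of p q] by (auto simp: cis_neq_zero)

lemma cis_eq_cis_iff: "cis p = cis q \<longleftrightarrow> (\<exists>n::int. q = p + 2 * pi * n)"
  unfolding sin_cos_eq_iff[symmetric] by (auto simp: complex_eq_iff)

lemma eq_if_cis_eq_of_continuous_omitting:
  fixes f :: "real \<Rightarrow> real"
  assumes cont: "continuous_on UNIV f" and omit: "\<And>x. cis (f x) \<noteq> cis w"
    and "cis (f x) = cis (f y)"
  shows "f x = f y"
proof -
  have no_gap: "f y < f x + 2 * pi" if "f x \<le> f y" for x y
  proof (rule ccontr)
    assume "\<not> f y < f x + 2 * pi"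
    define k where "k = \<lceil>(f x - w) / (2 * pi)\<rceil>"
    have "(f x - w) / (2 * pi) \<le> k" "k < (f x - w) / (2 * pi) + 1"
      using ceiling_correct[of "(f x - w) / (2 * pi)"] by (auto simp: k_def)
    then have between: "f x \<le> w + 2 * pi * k" "w + 2 * pi * k \<le> f y"
      using \<open>\<not> f y < f x + 2 * pi\<close> by (auto simp: field_simps)
    have "connected (range f)"
      by (rule connected_continuous_image[OF cont]) simp
    then have "w + 2 * pi * k \<in> range f"
      using connectedD_interval between by blast
    moreover have "cis (w + 2 * pi * k) = cis w"
      by (simp add: cis_mult[symmetric])
    ultimately show False
      using omit by auto
  qed
  obtain n :: int where n: "f y = f x + 2 * pi * n"
    using \<open>cis (f x) = cis (f y)\<close> cis_eq_cis_iff by blast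
  have "\<bar>f y - f x\<bar> < 2 * pi"
    using no_gap[of x y] no_gap[of y x] by (cases "f x \<le> f y") auto
  then have "\<bar>real_of_int n\<bar> < 1"
    using n by (simp add: abs_mult)
  then have "n = 0"
    by linarith
  with n show ?thesis
    by simp
qed

lemma sgn_eq_if_continuous_nonzero:
  fixes S :: "real \<Rightarrow> real"
  assumes cont: "continuous_on UNIV S" and nz: "\<And>s. S s \<noteq> 0"
  shows "sgn (S s) = sgn (S s')"
proof (rule ccontr)
  assume "sgn (S s) \<noteq> sgn (S s')"
  then have "min (S s) (S s') < 0" "0 < max (S s) (S s')"
    using nz[of s] nz[of s'] by (auto simp: sgn_if split: if_splits)
  moreover have "connected (range S)"
    by (rule connected_continuous_image[OF cont]) simp
  ultimately have "0 \<in> range S"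
    using connectedD_interval[of "range S" "min (S s) (S s')" "max (S s) (S s')" 0]
    by (auto simp: min_def max_def)
  with nz show False
    by auto
qed

lemma winding_number_cis_diff_eq_0:
  fixes P Q :: "real \<Rightarrow> real"
  assumes cP: "continuous_on UNIV P" and cQ: "continuous_on UNIV Q"
    and ne: "\<And>s. cis (P s) \<noteq> cis (Q s)" and "P L = P 0" and "Q L = Q 0"
  shows "winding_number (\<lambda>u. (cis (P (L * u)) - cis (Q (L * u))) / 2) 0 = 0"
proof -
  define S where "S = (\<lambda>s. sin ((P s - Q s) / 2))"
  have nz: "S s \<noteq> 0" for s
    using ne[of s] by (simp add: S_def cis_eq_cis_iff_sin_half_diff)
  have cS: "continuous_on UNIV S"
    unfolding S_def by (intro continuous_intros cP cQ) simp
  \<comment> \<open>\<open>q\<close> is a continuous logarithm of \<open>(cis P - cis Q) / 2 = \<i> S cis ((P + Q) / 2)\<close>;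
    \<open>c = \<plusminus>\<pi>/2\<close> absorbs the constant sign of \<open>S\<close>.\<close>
  define c where "c = sgn (S 0) * pi / 2"
  define q where "q = (\<lambda>s. of_real (ln \<bar>S s\<bar>) + \<i> * of_real (c + (P s + Q s) / 2))"
  have "exp (q s) = of_real \<bar>S s\<bar> * cis (c + (P s + Q s) / 2)" for s
    unfolding q_def exp_add cis_conv_exp using nz[of s] by (simp add: exp_of_real)
  then have "exp (q s) = of_real \<bar>S s\<bar> * cis c * cis ((P s + Q s) / 2)" for s
    by (simp add: cis_mult mult.assoc)
  moreover have "of_real \<bar>S s\<bar> * cis c = \<i> * of_real (S s)" for s
  proof -
    have "0 < S s \<longleftrightarrow> 0 < S 0"
      using sgn_eq_if_continuous_nonzero[OF cS nz, of s 0] by (metis sgn_greater)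
    then show ?thesis
      using nz[of s] nz[of 0] by (cases "0 < S 0") (simp_all add: c_def)
  qed
  ultimately have exp_q: "exp (q s) = (cis (P s) - cis (Q s)) / 2" for s
    by (simp add: cis_diff S_def)
  define p where "p = (\<lambda>u. q (L * u))"
  have "continuous_on UNIV q"
    unfolding q_def using nz by (intro continuous_intros cS cP cQ) auto
  then have "path p"
    unfolding path_def p_def by (rule continuous_on_compose2) (auto intro: continuous_intros)
  have "winding_number (\<lambda>u. (cis (P (L * u)) - cis (Q (L * u))) / 2) 0
      = winding_number (exp \<circ> p) 0"
    by (simp add: p_def exp_q o_def)
  also have "\<dots> = (pathfinish p - pathstart p) / (2 * of_real pi * \<i>)"
    by (rule winding_number_compose_exp[OF \<open>path p\<close>])
  also have "pathfinish p = pathstart p"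
    using \<open>P L = P 0\<close> \<open>Q L = Q 0\<close> by (simp add: pathfinish_def pathstart_def p_def q_def S_def)
  finally show ?thesis
    by simp
qed

lemma cis_surj_if_winding_number_cis_diff_nonzero:
  fixes P Q :: "real \<Rightarrow> real"
  assumes cP: "continuous_on UNIV P" and cQ: "continuous_on UNIV Q"
    and ne: "\<And>s. cis (P s) \<noteq> cis (Q s)"
    and "cis (P L) = cis (P 0)" and "cis (Q L) = cis (Q 0)"
    and "winding_number (\<lambda>u. (cis (P (L * u)) - cis (Q (L * u))) / 2) 0 \<noteq> 0"
  shows "\<exists>v. cis (Q v) = cis w"
proof (rule ccontr)
  assume "\<nexists>v. cis (Q v) = cis w"
  then have "Q L = Q 0"
    using eq_if_cis_eq_of_continuous_omitting[OF cQ] \<open>cis (Q L) = cis (Q 0)\<close> by blast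
  have "cis (P s - Q s) \<noteq> cis 0" for s
    using ne[of s] by (auto simp: cis_divide[symmetric] divide_eq_1_iff)
  moreover have "cis (P L - Q L) = cis (P 0 - Q 0)"
    using \<open>cis (P L) = cis (P 0)\<close> \<open>cis (Q L) = cis (Q 0)\<close> by (simp flip: cis_divide)
  moreover have "continuous_on UNIV (\<lambda>s. P s - Q s)"
    by (intro continuous_intros cP cQ)
  ultimately have "P L - Q L = P 0 - Q 0"
    using eq_if_cis_eq_of_continuous_omitting[of "\<lambda>s. P s - Q s" 0] by blast
  with \<open>Q L = Q 0\<close> have "P L = P 0"
    by simp
  with winding_number_cis_diff_eq_0[OF cP cQ ne _ \<open>Q L = Q 0\<close>] assms(6) show False
    by simp
qed

lemma sgn_tendsto_at_simple_zero:
  fixes \<sigma> :: "real \<Rightarrow> real"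
  assumes der: "(\<sigma> has_real_derivative D) (at s)" and "\<sigma> s = 0" and "D \<noteq> 0"
  shows "((\<lambda>y. sgn (\<sigma> y)) \<longlongrightarrow> sgn D) (at_right s)"
    and "((\<lambda>y. sgn (\<sigma> y)) \<longlongrightarrow> - sgn D) (at_left s)"
proof -
  define q where "q = (\<lambda>y. \<sigma> y / (y - s))"
  have "(q \<longlongrightarrow> D) (at s)"
    using der \<open>\<sigma> s = 0\<close> by (simp add: q_def has_field_derivative_iff)
  then have sgn_q: "((\<lambda>y. sgn (q y)) \<longlongrightarrow> sgn D) (at s)"
    using \<open>D \<noteq> 0\<close> by (rule tendsto_sgn)
  have sgn_\<sigma>: "sgn (\<sigma> y) = sgn (q y) * sgn (y - s)" if "y \<noteq> s" for y
    using that by (auto simp: q_def sgn_if zero_less_divide_iff divide_less_0_iff)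
  have "\<forall>\<^sub>F y in at_right s. sgn (q y) = sgn (\<sigma> y)"
    by (auto simp: eventually_at_right_field sgn_\<sigma> intro: exI[of _ "s + 1"])
  then show "((\<lambda>y. sgn (\<sigma> y)) \<longlongrightarrow> sgn D) (at_right s)"
    using tendsto_mono[OF at_le sgn_q] by (auto intro: Lim_transform_eventually)
  have "\<forall>\<^sub>F y in at_left s. - sgn (q y) = sgn (\<sigma> y)"
    by (auto simp: eventually_at_left_field sgn_\<sigma> intro: exI[of _ "s - 1"])
  then show "((\<lambda>y. sgn (\<sigma> y)) \<longlongrightarrow> - sgn D) (at_left s)"
    using tendsto_minus[OF tendsto_mono[OF at_le sgn_q]] by (auto intro: Lim_transform_eventually)
qed

lemma sgn_scaleR_discontinuous_at_simple_zero:
  fixes h g :: "real \<Rightarrow> 'a::real_normed_vector"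
  assumes der: "(\<sigma> has_real_derivative D) (at s)" and "\<sigma> s = 0" and "D \<noteq> 0"
    and "isCont h s" and "h s \<noteq> 0" and "isCont g s"
    and g: "\<And>y. \<sigma> y \<noteq> 0 \<Longrightarrow> g y = sgn (\<sigma> y *\<^sub>R h y)"
  shows False
proof -
  have side_value: "g s = c *\<^sub>R sgn (h s)"
    if F: "F \<le> at s" "F \<noteq> bot" and lim: "((\<lambda>y. sgn (\<sigma> y)) \<longlongrightarrow> c) F" and "c \<noteq> 0" for F c
  proof -
    have "\<forall>\<^sub>F y in F. sgn (\<sigma> y) \<noteq> 0"
      using tendsto_imp_eventually_ne[OF lim \<open>c \<noteq> 0\<close>] .
    then have eq: "\<forall>\<^sub>F y in F. sgn (\<sigma> y) *\<^sub>R sgn (h y) = g y"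
      by eventually_elim (subst g, auto simp: sgn_scaleR)
    have "((\<lambda>y. sgn (\<sigma> y) *\<^sub>R sgn (h y)) \<longlongrightarrow> c *\<^sub>R sgn (h s)) F"
      using \<open>isCont h s\<close> \<open>h s \<noteq> 0\<close> F(1)
      by (intro tendsto_scaleR lim tendsto_sgn) (auto simp: isCont_def intro: tendsto_mono)
    then have "(g \<longlongrightarrow> c *\<^sub>R sgn (h s)) F"
      using tendsto_cong[OF eq] by blast
    moreover have "(g \<longlongrightarrow> g s) F"
      using \<open>isCont g s\<close> F(1) by (auto simp: isCont_def intro: tendsto_mono)
    ultimately show ?thesis
      using F(2) by (simp add: tendsto_unique)
  qed
  note sgn_lim = sgn_tendsto_at_simple_zero[OF der \<open>\<sigma> s = 0\<close> \<open>D \<noteq> 0\<close>]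
  have "g s = sgn D *\<^sub>R sgn (h s)"
    by (rule side_value[OF at_le _ sgn_lim(1)]) (use \<open>D \<noteq> 0\<close> in \<open>auto simp: sgn_zero_iff\<close>)
  moreover have "g s = - sgn D *\<^sub>R sgn (h s)"
    by (rule side_value[OF at_le _ sgn_lim(2)]) (use \<open>D \<noteq> 0\<close> in \<open>auto simp: sgn_zero_iff\<close>)
  ultimately have "(2 * sgn D) *\<^sub>R sgn (h s) = 0"
    by (simp add: scaleR_2 flip: scaleR_scaleR) (metis add.right_inverse)
  then show False
    using \<open>D \<noteq> 0\<close> \<open>h s \<noteq> 0\<close> by (simp add: sgn_zero_iff)
qed

lemma cis_eq_imp_deriv_eq_if_continuous_direction:
  fixes P Q :: "real \<Rightarrow> real" and g :: "real \<Rightarrow> complex"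
  assumes dP: "(P has_real_derivative P') (at (s + t))"
    and dQ: "(Q has_real_derivative Q') (at (s - t))"
    and "isCont g s"
    and g: "\<And>y. cis (P (y + t)) \<noteq> cis (Q (y - t)) \<Longrightarrow> g y = sgn (cis (P (y + t)) - cis (Q (y - t)))"
    and eq: "cis (P (s + t)) = cis (Q (s - t))"
  shows "P' = Q'"
proof (rule ccontr)
  assume "P' \<noteq> Q'"
  define \<theta> where "\<theta> = (\<lambda>y. (P (y + t) - Q (y - t)) / 2)"
  define h where "h = (\<lambda>y. 2 * \<i> * cis ((P (y + t) + Q (y - t)) / 2))"
  have dP': "((\<lambda>y. P (y + t)) has_real_derivative P') (at s)"
    using dP by (simp flip: DERIV_shift)
  have dQ': "((\<lambda>y. Q (y - t)) has_real_derivative Q') (at s)"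
    using dQ DERIV_shift[of Q Q' s "- t"] by simp
  have d\<theta>: "(\<theta> has_real_derivative (P' - Q') / 2) (at s)"
    unfolding \<theta>_def by (intro DERIV_cdivide DERIV_diff dP' dQ')
  have "sin (\<theta> s) = 0"
    using eq by (simp add: \<theta>_def cis_eq_cis_iff_sin_half_diff)
  then have "cos (\<theta> s) \<noteq> 0"
    using sin_cos_squared_add[of "\<theta> s"] by auto
  show False
  proof (rule sgn_scaleR_discontinuous_at_simple_zero)
    show "((\<lambda>y. sin (\<theta> y)) has_real_derivative cos (\<theta> s) * ((P' - Q') / 2)) (at s)"
      using d\<theta> by (auto intro!: derivative_eq_intros)
    show "cos (\<theta> s) * ((P' - Q') / 2) \<noteq> 0"
      using \<open>cos (\<theta> s) \<noteq> 0\<close> \<open>P' \<noteq> Q'\<close> by simp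
    have "isCont (\<lambda>y. P (y + t)) s" "isCont (\<lambda>y. Q (y - t)) s"
      using DERIV_isCont dP' dQ' by auto
    then show "isCont h s"
      unfolding h_def cis_conv_exp by (auto intro!: continuous_intros)
    show "h s \<noteq> 0"
      by (simp add: h_def cis_neq_zero)
    show "g y = sgn (sin (\<theta> y) *\<^sub>R h y)" if "sin (\<theta> y) \<noteq> 0" for y
      using g[of y] that cis_diff[of "P (y + t)" "Q (y - t)"]
      by (simp add: \<theta>_def h_def cis_eq_cis_iff_sin_half_diff scaleR_conv_of_real ac_simps)
  qed (use \<open>sin (\<theta> s) = 0\<close> \<open>isCont g s\<close> in auto)
qed

lemma last_level_crossing:
  fixes g :: "real \<Rightarrow> real"
  assumes "a \<le> b" and cont: "continuous_on {a..b} g" and "g b < c" and "c \<le> g a"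
  obtains x where "a \<le> x" "x < b" "g x = c" "\<And>y. x < y \<Longrightarrow> y \<le> b \<Longrightarrow> g y < c"
proof -
  define S where "S = {a..b} \<inter> g -` {c..}"
  have "closed S"
    unfolding S_def by (rule continuous_closed_preimage[OF cont]) auto
  moreover have "a \<in> S" "bdd_above S"
    using \<open>a \<le> b\<close> \<open>c \<le> g a\<close> by (auto simp: S_def)
  ultimately have "Sup S \<in> S"
    using closed_contains_Sup by blast
  define x where "x = Sup S"
  have above: "g y < c" if "x < y" "y \<le> b" for y
    using that cSup_upper[OF _ \<open>bdd_above S\<close>, of y] \<open>a \<in> S\<close> \<open>Sup S \<in> S\<close>
    by (force simp: S_def x_def)
  have "x < b" "a \<le> x" "c \<le> g x"
    using \<open>Sup S \<in> S\<close> \<open>g b < c\<close> by (auto simp: S_def x_def le_less)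
  moreover have "g x \<le> c"
  proof (rule ccontr)
    assume "\<not> g x \<le> c"
    then obtain z where "x \<le> z" "z \<le> b" "g z = c"
      using IVT2'[of g b c x] \<open>x < b\<close> \<open>g b < c\<close> \<open>a \<le> x\<close>
        continuous_on_subset[OF cont] by fastforce
    then show False
      using above[of z] \<open>\<not> g x \<le> c\<close> by (cases "x = z") auto
  qed
  ultimately show thesis
    using that above by fastforce
qed

lemma le_between_equal_values_if_deriv_depends_on_value:
  fixes g g' :: "real \<Rightarrow> real"
  assumes der: "\<And>x. (g has_real_derivative g' x) (at x)"
    and deriv_eq: "\<And>x y. g x = g y \<Longrightarrow> g' x = g' y"
    and "a \<le> b" and "g a = g b" and "x \<in> {a..b}"
  shows "g x \<le> g a"
proof (rule ccontr)
  assume "\<not> g x \<le> g a"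
  have cont: "continuous_on S g" for S
    using der by (meson DERIV_isCont continuous_at_imp_continuous_on)
  obtain m where m: "m \<in> {a..b}" "\<And>y. y \<in> {a..b} \<Longrightarrow> g y \<le> g m"
    using continuous_attains_sup[of "{a..b}" g] cont \<open>a \<le> b\<close> by auto
  have "g a < g m"
    using m(2)[OF \<open>x \<in> {a..b}\<close>] \<open>\<not> g x \<le> g a\<close> by linarith
  have "a < m"
    using m(1) \<open>g a < g m\<close> by (cases "a = m") auto
  have "m < b"
    using m(1) \<open>g a < g m\<close> \<open>g a = g b\<close> by (cases "m = b") auto
  have cont_neg: "continuous_on {a..m} (\<lambda>y. - g y)"
    by (intro continuous_intros cont)
  obtain a0 where a0: "a \<le> a0" "a0 < m" "- g a0 = - g a"
    and a0_below: "\<And>y. a0 < y \<Longrightarrow> y \<le> m \<Longrightarrow> - g y < - g a"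
    by (rule last_level_crossing[OF _ cont_neg]) (use \<open>a < m\<close> \<open>g a < g m\<close> in auto)
  obtain \<xi> where \<xi>: "a0 < \<xi>" "\<xi> < m" "g m - g a0 = (m - a0) * g' \<xi>"
    using MVT2[OF \<open>a0 < m\<close>, of g g'] der by blast
  have "0 < (m - a0) * g' \<xi>"
    using \<xi>(3) a0(3) \<open>g a < g m\<close> by simp
  then have "0 < g' \<xi>"
    using \<open>a0 < m\<close> by (simp add: zero_less_mult_iff)
  have "g a < g \<xi>"
    using a0_below[of \<xi>] \<xi> by simp
  have "g \<xi> \<le> g m"
    using m(2)[of \<xi>] a0(1) \<xi> \<open>m < b\<close> by simp
  \<comment> \<open>\<open>g\<close> crosses the level \<open>g \<xi>\<close> upwards at \<open>\<xi>\<close>, so its last crossing before \<open>b\<close>,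
    which is downwards, contradicts \<open>g' b1 = g' \<xi>\<close>.\<close>
  obtain b1 where b1: "m \<le> b1" "b1 < b" "g b1 = g \<xi>" "\<And>y. b1 < y \<Longrightarrow> y \<le> b \<Longrightarrow> g y < g \<xi>"
    by (rule last_level_crossing[of m b g "g \<xi>"])
       (use \<open>m < b\<close> \<open>g a = g b\<close> \<open>g a < g \<xi>\<close> \<open>g \<xi> \<le> g m\<close> cont in auto)
  have "0 < g' b1"
    using deriv_eq[OF b1(3)] \<open>0 < g' \<xi>\<close> by simp
  then obtain d where "0 < d" and up: "\<And>h. 0 < h \<Longrightarrow> h < d \<Longrightarrow> g b1 < g (b1 + h)"
    using DERIV_pos_inc_right[OF der[of b1]] by blast
  define h where "h = min d (b - b1) / 2"
  have "0 < h" "h < d" "b1 + h \<le> b"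
    using \<open>0 < d\<close> \<open>b1 < b\<close> by (auto simp: h_def min_def field_simps)
  then show False
    using up[of h] b1(3) b1(4)[of "b1 + h"] by simp
qed

lemma constant_between_equal_values_if_deriv_depends_on_value:
  fixes g g' :: "real \<Rightarrow> real"
  assumes der: "\<And>x. (g has_real_derivative g' x) (at x)"
    and deriv_eq: "\<And>x y. g x = g y \<Longrightarrow> g' x = g' y"
    and "a \<le> b" and "g a = g b" and "x \<in> {a..b}"
  shows "g x = g a"
proof -
  have "- g x \<le> - g a"
  proof (rule le_between_equal_values_if_deriv_depends_on_value[of "\<lambda>x. - g x" "\<lambda>x. - g' x"])
    show "((\<lambda>x. - g x) has_real_derivative - g' x) (at x)" for x
      using der by (rule DERIV_minus)
    show "- g' x = - g' y" if "- g x = - g y" for x y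
      using deriv_eq[of x y] that by simp
  qed (use assms(3-5) in auto)
  with le_between_equal_values_if_deriv_depends_on_value[OF assms] show ?thesis
    by linarith
qed

lemma smooth_fun_differentiable: "smooth_fun f \<Longrightarrow> f differentiable (at x)"
  unfolding smooth_fun_def by (metis funpow_0)

lemma has_real_derivative_vderiv:
  "f differentiable (at x) \<Longrightarrow> (f has_real_derivative vderiv f x) (at x)"
  unfolding vderiv_def by (metis has_real_derivative_iff_has_vector_derivative vector_derivative_works)

lemma continuous_on_if_differentiable:
  "(\<And>x. f differentiable (at x)) \<Longrightarrow> continuous_on UNIV f"
  by (meson continuous_at_imp_continuous_on differentiable_imp_continuous_within)

lemma has_vector_derivative_shift_arg:
  fixes f :: "real \<Rightarrow> 'a::real_normed_vector"
  assumes "(f has_vector_derivative D) (at (x + c))"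
  shows "((\<lambda>y. f (y + c)) has_vector_derivative D) (at x)"
proof -
  have "((\<lambda>y. y + c) has_vector_derivative 1) (at x)"
    by (auto intro!: derivative_eq_intros simp flip: has_real_derivative_iff_has_vector_derivative)
  from vector_diff_chain_at[OF this] assms show ?thesis
    by (simp add: o_def)
qed

lemma vderiv_periodic:
  fixes f :: "real \<Rightarrow> 'a::real_normed_vector"
  assumes "\<And>s. f (s + L) = f s" and "f differentiable (at (s + L))"
  shows "vderiv f (s + L) = vderiv f s"
proof -
  have "(f has_vector_derivative vderiv f (s + L)) (at (s + L))"
    using assms(2) vector_derivative_works by (auto simp: vderiv_def)
  from has_vector_derivative_shift_arg[OF this] show ?thesis
    using assms(1) by (simp add: vderiv_def vector_derivative_at)
qed

lemma oint_eq_integral_diff: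
  fixes \<beta> :: "real \<Rightarrow> complex"
  assumes cont: "continuous_on UNIV \<beta>" and "a \<le> u" and "a \<le> v"
  shows "oint u v \<beta> = integral {a..v} \<beta> - integral {a..u} \<beta>"
proof -
  have int: "\<beta> integrable_on {x..y}" for x y
    by (rule integrable_continuous_real) (rule continuous_on_subset[OF cont], simp)
  show ?thesis
  proof (cases "u \<le> v")
    case True
    then show ?thesis
      unfolding oint_def using Henstock_Kurzweil_Integration.integral_combine[OF \<open>a \<le> u\<close> True int]
      by (simp add: algebra_simps)
  next
    case False
    then show ?thesis
      unfolding oint_def using Henstock_Kurzweil_Integration.integral_combine[OF \<open>a \<le> v\<close> _ int, of u]
      by (simp add: algebra_simps)
  qed
qed

lemma gam_s_eq:
  fixes \<alpha> \<beta> :: "real \<Rightarrow> complex"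
  assumes da: "\<And>x. \<alpha> differentiable (at x)" and cb: "continuous_on UNIV \<beta>"
  shows "gam_s \<alpha> \<beta> t s = (vderiv \<alpha> (s + t) + \<beta> (s + t) + (vderiv \<alpha> (s - t) - \<beta> (s - t))) / 2"
proof -
  define a where "a = s - \<bar>t\<bar> - 1"
  define I where "I = (\<lambda>x. integral {a..x} \<beta>)"
  have dI: "(I has_vector_derivative \<beta> x) (at x)" if "a < x" for x
  proof -
    have "(I has_vector_derivative \<beta> x) (at x within {a..x + 1})"
      unfolding I_def
      by (rule integral_has_vector_derivative) (use that continuous_on_subset[OF cb] in auto)
    moreover have "at x within {a..x + 1} = at x"
      using that by (intro at_within_Icc_at) auto
    ultimately show ?thesis
      by simp
  qed
  have dA: "(\<alpha> has_vector_derivative vderiv \<alpha> x) (at x)" for x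
    unfolding vderiv_def using da vector_derivative_works by blast
  define G where "G = (\<lambda>y. (\<alpha> (y + t) + \<alpha> (y + - t)) / 2 + (I (y + t) - I (y + - t)) / 2)"
  have dG: "(G has_vector_derivative
      (vderiv \<alpha> (s + t) + vderiv \<alpha> (s + - t)) / 2 + (\<beta> (s + t) - \<beta> (s + - t)) / 2) (at s)"
    unfolding G_def
    by (intro has_vector_derivative_add has_vector_derivative_diff has_vector_derivative_divide
          has_vector_derivative_shift_arg dA dI) (auto simp: a_def)
  have gam_eq_G: "gam \<alpha> \<beta> t y = G y" if "y \<in> {s - 1<..<s + 1}" for y
  proof -
    have "oint (y - t) (y + t) \<beta> = I (y + t) - I (y - t)"
      unfolding I_def by (rule oint_eq_integral_diff[OF cb]) (use that in \<open>auto simp: a_def\<close>)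
    then show ?thesis
      unfolding gam_def G_def by simp
  qed
  have "((\<lambda>y. gam \<alpha> \<beta> t y) has_vector_derivative
      (vderiv \<alpha> (s + t) + vderiv \<alpha> (s + - t)) / 2 + (\<beta> (s + t) - \<beta> (s + - t)) / 2) (at s)"
    by (rule has_vector_derivative_transform_within_open[OF dG, of "{s - 1<..<s + 1}"])
       (use gam_eq_G in auto)
  then show ?thesis
    unfolding gam_s_def vderiv_def[of "\<lambda>y. gam \<alpha> \<beta> t y"]
    by (simp add: vector_derivative_at field_simps)
qed

lemma unit_tangent_eq_sgn: "unit_tangent \<alpha> \<beta> t s = sgn (gam_s \<alpha> \<beta> t s)"
  by (simp add: unit_tangent_def complex_sgn_def scaleR_conv_of_real divide_inverse_commute
      of_real_inverse)

lemma tangent_angle_derivs_eq_if_unit_tangent_continuous: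
  fixes \<alpha> \<beta> :: "real \<Rightarrow> complex" and \<psi> \<psi>t :: "real \<Rightarrow> real"
  assumes "\<And>x. \<alpha> differentiable (at x)" and "continuous_on UNIV \<beta>"
    and "\<And>x. \<psi> differentiable (at x)" and "\<And>x. \<psi>t differentiable (at x)"
    and a: "\<And>s. vderiv \<alpha> s + \<beta> s = cis (\<psi> s)"
    and b: "\<And>s. vderiv \<alpha> s - \<beta> s = - cis (\<psi>t s)"
    and "unit_tangent_continuous \<alpha> \<beta>"
    and "cis (\<psi> u) = cis (\<psi>t v)"
  shows "vderiv \<psi> u = vderiv \<psi>t v"
proof -
  define t where "t = (u - v) / 2"
  define s where "s = (u + v) / 2"
  have "s + t = u" "s - t = v"
    by (simp_all add: s_def t_def field_simps)
  obtain g where "continuous_on UNIV g"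
    and g: "\<And>y. gam_s \<alpha> \<beta> t y \<noteq> 0 \<Longrightarrow> g y = unit_tangent \<alpha> \<beta> t y"
    using \<open>unit_tangent_continuous \<alpha> \<beta>\<close> unfolding unit_tangent_continuous_def by blast
  have gam_s: "gam_s \<alpha> \<beta> t y = (cis (\<psi> (y + t)) - cis (\<psi>t (y - t))) / 2" for y
    using gam_s_eq[OF assms(1,2)] by (simp add: a b)
  show ?thesis
  proof (rule cis_eq_imp_deriv_eq_if_continuous_direction)
    show "(\<psi> has_real_derivative vderiv \<psi> u) (at (s + t))"
      "(\<psi>t has_real_derivative vderiv \<psi>t v) (at (s - t))"
      using assms(3,4) \<open>s + t = u\<close> \<open>s - t = v\<close> by (simp_all add: has_real_derivative_vderiv)
    show "isCont g s"
      using \<open>continuous_on UNIV g\<close> by (simp add: continuous_on_eq_continuous_at)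
    show "g y = sgn (cis (\<psi> (y + t)) - cis (\<psi>t (y - t)))"
      if "cis (\<psi> (y + t)) \<noteq> cis (\<psi>t (y - t))" for y
      using g[of y] that sgn_of_real[of 2, where 'a = complex]
      by (simp add: gam_s unit_tangent_eq_sgn sgn_divide)
  qed (use \<open>s + t = u\<close> \<open>s - t = v\<close> \<open>cis (\<psi> u) = cis (\<psi>t v)\<close> in simp)
qed

lemma tilde_tangent_angle_cis_surj_if_rotation_index_nonzero:
  fixes \<alpha> \<beta> :: "real \<Rightarrow> complex" and \<psi> \<psi>t :: "real \<Rightarrow> real"
  assumes "\<And>x. \<alpha> differentiable (at x)"
    and "continuous_on UNIV \<psi>" and "continuous_on UNIV \<psi>t"
    and "\<And>s. \<alpha> (s + L) = \<alpha> s" and "\<And>s. \<beta> (s + L) = \<beta> s"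
    and "\<And>s. vderiv \<alpha> s \<noteq> 0"
    and a: "\<And>s. vderiv \<alpha> s + \<beta> s = cis (\<psi> s)"
    and b: "\<And>s. vderiv \<alpha> s - \<beta> s = - cis (\<psi>t s)"
    and "rotation_index L \<alpha> \<noteq> 0"
  shows "\<exists>v. cis (\<psi>t v) = cis w"
proof (rule cis_surj_if_winding_number_cis_diff_nonzero[OF assms(2,3)])
  have \<alpha>': "vderiv \<alpha> s = (cis (\<psi> s) - cis (\<psi>t s)) / 2" for s
  proof -
    have "vderiv \<alpha> s = ((vderiv \<alpha> s + \<beta> s) + (vderiv \<alpha> s - \<beta> s)) / 2"
      by (simp add: field_simps)
    then show ?thesis
      by (simp only: a b) simp
  qed
  show "cis (\<psi> s) \<noteq> cis (\<psi>t s)" for s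
    using \<alpha>'[of s] assms(6)[of s] by auto
  have "vderiv \<alpha> (0 + L) = vderiv \<alpha> 0" "\<beta> (0 + L) = \<beta> 0"
    using vderiv_periodic[OF assms(4,1)] assms(5) by blast+
  then show "cis (\<psi> L) = cis (\<psi> 0)" "cis (\<psi>t L) = cis (\<psi>t 0)"
    using a[of L] a[of 0] b[of L] b[of 0] by simp_all
  show "winding_number (\<lambda>u. (cis (\<psi> (L * u)) - cis (\<psi>t (L * u))) / 2) 0 \<noteq> 0"
    using \<open>rotation_index L \<alpha> \<noteq> 0\<close> by (simp add: rotation_index_def \<alpha>')
qed

theorem lemma2p7:
  fixes L :: real and \<alpha> \<beta> :: "real \<Rightarrow> complex" and \<psi> \<psi>t :: "real \<Rightarrow> real"
    and s0 s1 r0 :: real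
  assumes "L > 0"
    and "smooth_fun \<alpha>" and "smooth_fun \<beta>"
    and "\<And>s. \<alpha> (s + L) = \<alpha> s" and "\<And>s. \<beta> (s + L) = \<beta> s"
    and "\<And>s. vderiv \<alpha> s \<noteq> 0"
    and "\<And>s. inner (\<beta> s) (vderiv \<alpha> s) = 0"
    and "\<And>s. (cmod (vderiv \<alpha> s))\<^sup>2 + (cmod (\<beta> s))\<^sup>2 = 1"
    and "smooth_fun \<psi>" and "smooth_fun \<psi>t"
    and "\<And>s. vderiv \<alpha> s + \<beta> s = cis (\<psi> s)"
    and "\<And>s. vderiv \<alpha> s - \<beta> s = - cis (\<psi>t s)"
    and "rotation_index L \<alpha> \<noteq> 0"
    and "unit_tangent_continuous \<alpha> \<beta>"
    and "\<psi> s0 = \<psi> s1" and "\<psi> s1 = \<psi>t r0"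
    and "0 < s1 - s0" and "s1 - s0 < L"
  shows "\<forall>x\<in>{s0<..<s1}. \<forall>y\<in>{s0<..<s1}. \<psi> x = \<psi> y"
proof -
  note diff = smooth_fun_differentiable[OF assms(2)] smooth_fun_differentiable[OF assms(3)]
    smooth_fun_differentiable[OF assms(9)] smooth_fun_differentiable[OF assms(10)]
  note cont = continuous_on_if_differentiable[OF diff(2)] continuous_on_if_differentiable[OF diff(3)]
    continuous_on_if_differentiable[OF diff(4)]
  have deriv_eq: "vderiv \<psi> x = vderiv \<psi> y" if "\<psi> x = \<psi> y" for x y
  proof -
    note angle_derivs_eq =
      tangent_angle_derivs_eq_if_unit_tangent_continuous[OF diff(1) cont(1) diff(3,4) assms(11,12,14)]
    obtain v where v: "cis (\<psi>t v) = cis (\<psi> x)"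
      using tilde_tangent_angle_cis_surj_if_rotation_index_nonzero[OF diff(1) cont(2,3) assms(4-6,11-13)]
      by blast
    have "vderiv \<psi> x = vderiv \<psi>t v" "vderiv \<psi> y = vderiv \<psi>t v"
      using v that by (simp_all add: angle_derivs_eq)
    then show ?thesis
      by simp
  qed
  have "\<psi> x = \<psi> s0" if "x \<in> {s0<..<s1}" for x
    using constant_between_equal_values_if_deriv_depends_on_value
        [OF has_real_derivative_vderiv[OF diff(3)] deriv_eq _ \<open>\<psi> s0 = \<psi> s1\<close>, of x]
        that \<open>0 < s1 - s0\<close>
    by simp
  then show ?thesis
    by (intro ballI) metis
qed

end
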